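(* $D_0$ is dense in $L_2^+(m)$. If in addition the semigroup is symmetric (each $T_t$ self-adjoint on $L_2(m)$), then $D_0$ is a dense subset of $L_1^+(m)$.
   Context: $(E,\mathcal B(E),m)$ is a $\sigma$-finite measure space. $p_t(x,\cdot)$, $t\ge0$, is a transition probability function on $E$ (probability measures, jointly measurable in $(t,x)$, $p_0(x,A)=1_A(x)$); $p_tf(x)=\int f\,dp_t(x,\cdot)$. $(T_t)$ is a strongly continuous semigroup on $L_2(m)$ such that for every bounded measurable $f$ with $\int f^2dm<\infty$, $p_tf$ is a representative of $T_tf$. $L_p^+(m)$ denotes the nonnegative elements of $L_p(m)$. $D=\{u\text{ bounded measurable},u\ge0,\int u\,dm<\infty\}$, and $D_0=\{\frac1t\int_0^tp_su\,ds: u\in D,\ t>0\}$. *)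

theory Defs
  imports "HOL-Probability.Probability"
begin

definition L2 :: "'a measure \<Rightarrow> ('a \<Rightarrow> real) \<Rightarrow> bool" where
  "L2 M f \<longleftrightarrow> f \<in> borel_measurable M \<and> integrable M (\<lambda>x. (f x)\<^sup>2)"

definition L1 :: "'a measure \<Rightarrow> ('a \<Rightarrow> real) \<Rightarrow> bool" where
  "L1 M f \<longleftrightarrow> f \<in> borel_measurable M \<and> integrable M f"

definition bdd_meas :: "'a measure \<Rightarrow> ('a \<Rightarrow> real) \<Rightarrow> bool" where
  "bdd_meas M f \<longleftrightarrow> f \<in> borel_measurable M \<and> (\<exists>B. \<forall>x\<in>space M. \<bar>f x\<bar> \<le> B)"

definition transition_prob :: "'a measure \<Rightarrow> (real \<Rightarrow> 'a \<Rightarrow> 'a measure) \<Rightarrow> bool" where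
  "transition_prob M p \<longleftrightarrow>
     (\<forall>t\<ge>0. \<forall>x\<in>space M. prob_space (p t x) \<and> sets (p t x) = sets M) \<and>
     (\<forall>A\<in>sets M. (\<lambda>(t, x). measure (p t x) A)
          \<in> borel_measurable (restrict_space borel {0..} \<Otimes>\<^sub>M M)) \<and>
     (\<forall>x\<in>space M. \<forall>A\<in>sets M. measure (p 0 x) A = indicator A x)"

definition ptf :: "(real \<Rightarrow> 'a \<Rightarrow> 'a measure) \<Rightarrow> real \<Rightarrow> ('a \<Rightarrow> real) \<Rightarrow> 'a \<Rightarrow> real" where
  "ptf p t f x = (\<integral>y. f y \<partial>(p t x))"

text \<open>Strongly continuous semigroup of bounded linear operators on L_2(m),
  given as operators on representatives that respect a.e. equality.\<close>
definition strongly_cont_semigroup_L2 ::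
  "'a measure \<Rightarrow> (real \<Rightarrow> ('a \<Rightarrow> real) \<Rightarrow> ('a \<Rightarrow> real)) \<Rightarrow> bool" where
  "strongly_cont_semigroup_L2 M T \<longleftrightarrow>
     (\<forall>t\<ge>0. \<forall>f. L2 M f \<longrightarrow> L2 M (T t f)) \<and>
     (\<forall>t\<ge>0. \<forall>f g. L2 M f \<longrightarrow> L2 M g \<longrightarrow> (AE x in M. f x = g x) \<longrightarrow>
        (AE x in M. T t f x = T t g x)) \<and>
     (\<forall>t\<ge>0. \<forall>f g a b. L2 M f \<longrightarrow> L2 M g \<longrightarrow>
        (AE x in M. T t (\<lambda>y. a * f y + b * g y) x = a * T t f x + b * T t g x)) \<and>
     (\<forall>t\<ge>0. \<exists>C. \<forall>f. L2 M f \<longrightarrow>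
        (\<integral>x. (T t f x)\<^sup>2 \<partial>M) \<le> C * (\<integral>x. (f x)\<^sup>2 \<partial>M)) \<and>
     (\<forall>f. L2 M f \<longrightarrow> (AE x in M. T 0 f x = f x)) \<and>
     (\<forall>s\<ge>0. \<forall>t\<ge>0. \<forall>f. L2 M f \<longrightarrow> (AE x in M. T (s + t) f x = T s (T t f) x)) \<and>
     (\<forall>f. L2 M f \<longrightarrow> ((\<lambda>t. \<integral>x. (T t f x - f x)\<^sup>2 \<partial>M) \<longlongrightarrow> 0) (at_right 0))"

definition symmetric_semigroup_L2 ::
  "'a measure \<Rightarrow> (real \<Rightarrow> ('a \<Rightarrow> real) \<Rightarrow> ('a \<Rightarrow> real)) \<Rightarrow> bool" where
  "symmetric_semigroup_L2 M T \<longleftrightarrow>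
     (\<forall>t\<ge>0. \<forall>f g. L2 M f \<longrightarrow> L2 M g \<longrightarrow>
        (\<integral>x. T t f x * g x \<partial>M) = (\<integral>x. f x * T t g x \<partial>M))"

definition Dset :: "'a measure \<Rightarrow> ('a \<Rightarrow> real) set" where
  "Dset M = {u. bdd_meas M u \<and> (\<forall>x\<in>space M. 0 \<le> u x) \<and> integrable M u}"

definition D0set :: "'a measure \<Rightarrow> (real \<Rightarrow> 'a \<Rightarrow> 'a measure) \<Rightarrow> ('a \<Rightarrow> real) set" where
  "D0set M p = {(\<lambda>x. (1 / t) * (\<integral>s\<in>{0..t}. ptf p s u x \<partial>lborel)) | u t. u \<in> Dset M \<and> 0 < t}"

end

theory Submission
  imports Defs
begin

(*
  For u in D, the time average g_t = (1/t) int_0^t p_s u ds is nonnegative, and square integrable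
  because s |-> ||T_s u||_2 is bounded on [0, t]. Jensen's inequality in s followed by Fubini gives
  ||u - g_t||_2^2 <= sup_{0 < s <= t} ||T_s u - u||_2^2, which tends to 0 by strong continuity.
  Truncating a nonnegative f at the levels 1/n and n yields elements of D converging to f in L_2
  and in L_1.

  If T is symmetric, then int (p_s u) 1_A = int u (p_s 1_A) <= int u for every A of finite measure,
  so int p_s u <= int u and g_t lies in L_1. If moreover u vanishes off such a set A, this mass bound
  gives ||u - p_s u||_1 <= 2 int_A |u - p_s u|, which is controlled by m(A) and ||u - p_s u||_2;
  the same Jensen-Fubini argument then shows g_t -> u in L_1.
*)

section \<open>Integral inequalities\<close>

lemma square_diff_le: "((a::real) - c)\<^sup>2 \<le> 2 * (a - b)\<^sup>2 + 2 * (b - c)\<^sup>2"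
proof -
  have "0 \<le> (a - 2 * b + c)\<^sup>2" by simp
  then show ?thesis by (simp add: power2_eq_square algebra_simps)
qed

lemma abs_le_plus_square_div:
  fixes h \<eta> :: real
  assumes "0 < \<eta>"
  shows "\<bar>h\<bar> \<le> \<eta> + h\<^sup>2 / \<eta>"
proof (cases "\<bar>h\<bar> \<le> \<eta>")
  case True
  then show ?thesis using assms by (simp add: add_increasing2)
next
  case False
  then have "\<eta> * \<bar>h\<bar> \<le> \<bar>h\<bar> * \<bar>h\<bar>" using assms by (intro mult_right_mono) auto
  then have "\<bar>h\<bar> \<le> h\<^sup>2 / \<eta>" using assms by (simp add: field_simps power2_eq_square)
  then show ?thesis using assms by linarith
qed

lemma integrable_square_diff:
  assumes "L2 M f" "L2 M g"
  shows "integrable M (\<lambda>x. (f x - g x)\<^sup>2)"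
proof (rule Bochner_Integration.integrable_bound)
  show "integrable M (\<lambda>x. 2 * (f x)\<^sup>2 + 2 * (g x)\<^sup>2)" using assms unfolding L2_def by auto
  show "(\<lambda>x. (f x - g x)\<^sup>2) \<in> borel_measurable M"
    using assms unfolding L2_def by (intro borel_measurable_power borel_measurable_diff) auto
  show "AE x in M. norm ((f x - g x)\<^sup>2) \<le> norm (2 * (f x)\<^sup>2 + 2 * (g x)\<^sup>2)"
    using square_diff_le[where b=0] by (intro AE_I2) simp
qed

lemma integral_square_diff_triangle:
  assumes "L2 M f" "L2 M g" "L2 M h"
  shows "(\<integral>x. (f x - h x)\<^sup>2 \<partial>M) \<le> 2 * (\<integral>x. (f x - g x)\<^sup>2 \<partial>M) + 2 * (\<integral>x. (g x - h x)\<^sup>2 \<partial>M)"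
proof -
  have "(\<integral>x. (f x - h x)\<^sup>2 \<partial>M) \<le> (\<integral>x. 2 * (f x - g x)\<^sup>2 + 2 * (g x - h x)\<^sup>2 \<partial>M)"
    using assms integrable_square_diff square_diff_le by (intro integral_mono) auto
  also have "\<dots> = 2 * (\<integral>x. (f x - g x)\<^sup>2 \<partial>M) + 2 * (\<integral>x. (g x - h x)\<^sup>2 \<partial>M)"
    using integrable_square_diff[OF assms(1,2)] integrable_square_diff[OF assms(2,3)]
    by (subst Bochner_Integration.integral_add) auto
  finally show ?thesis .
qed

lemma integral_abs_diff_triangle:
  fixes f g h :: "'a \<Rightarrow> real"
  assumes "integrable M f" "integrable M g" "integrable M h"
  shows "(\<integral>x. \<bar>f x - h x\<bar> \<partial>M) \<le> (\<integral>x. \<bar>f x - g x\<bar> \<partial>M) + (\<integral>x. \<bar>g x - h x\<bar> \<partial>M)"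
proof -
  have "(\<integral>x. \<bar>f x - h x\<bar> \<partial>M) \<le> (\<integral>x. \<bar>f x - g x\<bar> + \<bar>g x - h x\<bar> \<partial>M)"
    using assms by (intro integral_mono) auto
  also have "\<dots> = (\<integral>x. \<bar>f x - g x\<bar> \<partial>M) + (\<integral>x. \<bar>g x - h x\<bar> \<partial>M)"
    using assms by (intro Bochner_Integration.integral_add) auto
  finally show ?thesis .
qed

text \<open>If \<open>u\<close> vanishes off \<open>A\<close> and \<open>v \<ge> 0\<close> has no more mass than \<open>u\<close>, the mass of \<open>v\<close> off \<open>A\<close>
  is paid for by the deficit of \<open>v\<close> on \<open>A\<close>.\<close>

lemma integral_abs_diff_le_twice_on:
  fixes u v :: "'a \<Rightarrow> real"
  assumes u: "integrable M u" and v: "integrable M v" and A: "A \<in> sets M"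
    and u_zero: "\<And>x. x \<in> space M - A \<Longrightarrow> u x = 0" and v_nonneg: "\<And>x. x \<in> space M \<Longrightarrow> 0 \<le> v x"
    and mass: "(\<integral>x. v x \<partial>M) \<le> (\<integral>x. u x \<partial>M)"
  shows "(\<integral>x. \<bar>u x - v x\<bar> \<partial>M) \<le> 2 * (\<integral>x. \<bar>u x - v x\<bar> * indicator A x \<partial>M)"
proof -
  have int: "integrable M (\<lambda>x. \<bar>u x - v x\<bar> * indicator A x)" "integrable M (\<lambda>x. u x * indicator A x)"
    "integrable M (\<lambda>x. v x * indicator A x)"
    using u v A by (auto intro: integrable_real_mult_indicator)
  have "(\<integral>x. \<bar>u x - v x\<bar> \<partial>M) = (\<integral>x. \<bar>u x - v x\<bar> * indicator A x + (v x - v x * indicator A x) \<partial>M)"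
    by (rule Bochner_Integration.integral_cong[OF refl]) (use u_zero v_nonneg in \<open>auto simp: indicator_def\<close>)
  also have "\<dots> = (\<integral>x. \<bar>u x - v x\<bar> * indicator A x \<partial>M) + ((\<integral>x. v x \<partial>M) - (\<integral>x. v x * indicator A x \<partial>M))"
    using int v by simp
  finally have split: "(\<integral>x. \<bar>u x - v x\<bar> \<partial>M) =
      (\<integral>x. \<bar>u x - v x\<bar> * indicator A x \<partial>M) + ((\<integral>x. v x \<partial>M) - (\<integral>x. v x * indicator A x \<partial>M))" .
  have "(\<integral>x. u x \<partial>M) = (\<integral>x. u x * indicator A x \<partial>M)"
    by (rule Bochner_Integration.integral_cong[OF refl]) (use u_zero in \<open>auto simp: indicator_def\<close>)
  moreover have "(\<integral>x. u x * indicator A x \<partial>M) - (\<integral>x. v x * indicator A x \<partial>M) \<le>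
      (\<integral>x. \<bar>u x - v x\<bar> * indicator A x \<partial>M)"
  proof -
    have "(\<integral>x. u x * indicator A x \<partial>M) - (\<integral>x. v x * indicator A x \<partial>M) =
        (\<integral>x. u x * indicator A x - v x * indicator A x \<partial>M)"
      using int by simp
    also have "\<dots> \<le> (\<integral>x. \<bar>u x - v x\<bar> * indicator A x \<partial>M)"
      using int by (intro integral_mono) (auto simp: indicator_def)
    finally show ?thesis .
  qed
  ultimately show ?thesis using split mass by linarith
qed

lemma integral_abs_indicator_le:
  fixes w :: "'a \<Rightarrow> real"
  assumes w: "w \<in> borel_measurable M" "integrable M (\<lambda>x. (w x)\<^sup>2)"
    and A: "A \<in> sets M" "emeasure M A < \<infinity>" and \<eta>: "0 < \<eta>"
  shows "(\<integral>x. \<bar>w x\<bar> * indicator A x \<partial>M) \<le> \<eta> * measure M A + (1 / \<eta>) * (\<integral>x. (w x)\<^sup>2 \<partial>M)"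
proof -
  have bound_int: "integrable M (\<lambda>x. \<eta> * indicator A x + (1 / \<eta>) * (w x)\<^sup>2)"
    using w A by (auto simp: less_top)
  have bound: "\<bar>w x\<bar> * indicator A x \<le> \<eta> * indicator A x + (1 / \<eta>) * (w x)\<^sup>2" for x
    using abs_le_plus_square_div[OF \<eta>, of "w x"] \<eta> by (auto simp: indicator_def)
  have "integrable M (\<lambda>x. \<bar>w x\<bar> * indicator A x)"
    using bound \<eta> w(1) A(1)
    by (intro Bochner_Integration.integrable_bound[OF bound_int] AE_I2) (auto simp: indicator_def)
  then have "(\<integral>x. \<bar>w x\<bar> * indicator A x \<partial>M) \<le> (\<integral>x. \<eta> * indicator A x + (1 / \<eta>) * (w x)\<^sup>2 \<partial>M)"
    using bound_int bound by (intro integral_mono) auto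
  also have "\<dots> = \<eta> * measure M A + (1 / \<eta>) * (\<integral>x. (w x)\<^sup>2 \<partial>M)"
    using w A by (simp add: less_top)
  finally show ?thesis .
qed

lemma (in sigma_finite_measure) nn_integral_le_of_finite_measure_sets:
  fixes f :: "'a \<Rightarrow> ennreal"
  assumes f [measurable]: "f \<in> borel_measurable M"
    and le: "\<And>A. A \<in> sets M \<Longrightarrow> emeasure M A < \<infinity> \<Longrightarrow> (\<integral>\<^sup>+x. f x * indicator A x \<partial>M) \<le> c"
  shows "(\<integral>\<^sup>+x. f x \<partial>M) \<le> c"
proof -
  obtain A :: "nat \<Rightarrow> 'a set" where A: "range A \<subseteq> sets M" "(\<Union>i. A i) = space M"
    "\<And>i. emeasure M (A i) \<noteq> \<infinity>" "incseq A"
    using sigma_finite_incseq by blast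
  have "(\<integral>\<^sup>+x. f x \<partial>M) = (\<integral>\<^sup>+x. (SUP i. f x * indicator (A i) x) \<partial>M)"
  proof (rule nn_integral_cong)
    fix x assume "x \<in> space M"
    then obtain j where j: "x \<in> A j" using A(2) by auto
    show "f x = (SUP i. f x * indicator (A i) x)"
    proof (rule antisym)
      show "f x \<le> (SUP i. f x * indicator (A i) x)" using j by (intro SUP_upper2[of j]) auto
      show "(SUP i. f x * indicator (A i) x) \<le> f x" by (intro SUP_least) (auto simp: indicator_def)
    qed
  qed
  also have "\<dots> = (SUP i. \<integral>\<^sup>+x. f x * indicator (A i) x \<partial>M)"
  proof (rule nn_integral_monotone_convergence_SUP)
    show "incseq (\<lambda>i x. f x * indicator (A i) x)"
      using A(4) by (auto simp: incseq_def le_fun_def indicator_def dest: monoD)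
  qed (use A(1) in auto)
  also have "\<dots> \<le> c"
    using A(1,3) by (intro SUP_least le) (auto simp: less_top)
  finally show ?thesis .
qed

lemma tendsto_at_right_0_by_running_bound:
  fixes F G :: "real \<Rightarrow> real"
  assumes G: "(G \<longlongrightarrow> 0) (at_right 0)" and F_nonneg: "\<And>t. 0 < t \<Longrightarrow> 0 \<le> F t"
    and F_le: "\<And>t e. 0 < t \<Longrightarrow> 0 \<le> e \<Longrightarrow> (\<And>s. s \<in> {0<..t} \<Longrightarrow> G s \<le> e) \<Longrightarrow> F t \<le> e"
  shows "(F \<longlongrightarrow> 0) (at_right 0)"
proof (rule order_tendstoI)
  fix a :: real assume a: "a < 0"
  have "\<forall>\<^sub>F t in at_right 0. 0 < (t::real)" by (rule eventually_at_right_less)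
  then show "\<forall>\<^sub>F t in at_right 0. a < F t" by eventually_elim (use F_nonneg a in force)
next
  fix e :: real assume e: "0 < e"
  then have "\<forall>\<^sub>F s in at_right 0. G s < e / 2" using order_tendstoD(2)[OF G, of "e / 2"] by simp
  then obtain b where b: "0 < b" "\<And>s. 0 < s \<Longrightarrow> s < b \<Longrightarrow> G s < e / 2"
    unfolding eventually_at_right[OF zero_less_one] by auto
  have "F t < e" if "0 < t" "t < b" for t
  proof -
    have "F t \<le> e / 2" using that e b(2) by (intro F_le) (auto intro: less_imp_le)
    then show ?thesis using e by simp
  qed
  then show "\<forall>\<^sub>F t in at_right 0. F t < e"
    unfolding eventually_at_right[OF zero_less_one] using b(1) by auto
qed

lemma eventually_at_right_0E:
  assumes "\<forall>\<^sub>F t in at_right (0::real). P t"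
  obtains t where "0 < t" "P t"
  using eventually_happens'[OF _ eventually_conj[OF eventually_at_right_less assms]] by auto

definition interval_mean :: "real \<Rightarrow> (real \<Rightarrow> real) \<Rightarrow> real" where
  "interval_mean t h = (1 / t) * (LINT s:{0..t}|lborel. h s)"

lemma interval_mean_cong:
  "(\<And>s. s \<in> {0..t} \<Longrightarrow> h s = h' s) \<Longrightarrow> interval_mean t h = interval_mean t h'"
  unfolding interval_mean_def by (metis set_lebesgue_integral_cong sets_lborel atLeastAtMost_borel)

lemma integrable_on_interval_bounded:
  fixes h :: "real \<Rightarrow> real"
  assumes "h \<in> borel_measurable lborel" "\<And>s. s \<in> {0..t} \<Longrightarrow> \<bar>h s\<bar> \<le> c"
  shows "set_integrable lborel {0..t} h"
  unfolding set_integrable_def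
  by (rule integrableI_bounded_set_indicator[where B=c]) (use assms in \<open>auto simp: emeasure_lborel_Icc_eq\<close>)

lemma interval_mean_nonneg:
  "(\<And>s. s \<in> {0..t} \<Longrightarrow> 0 \<le> h s) \<Longrightarrow> 0 \<le> t \<Longrightarrow> 0 \<le> interval_mean t h"
  unfolding interval_mean_def set_lebesgue_integral_def
  by (intro mult_nonneg_nonneg Bochner_Integration.integral_nonneg) (auto simp: indicator_def)

lemma interval_mean_const_diff:
  fixes h :: "real \<Rightarrow> real"
  assumes "h \<in> borel_measurable lborel" "\<And>s. s \<in> {0..t} \<Longrightarrow> \<bar>h s\<bar> \<le> c" and t: "0 < t"
  shows "interval_mean t (\<lambda>s. a - h s) = a - interval_mean t h"
proof -
  have "(LINT s:{0..t}|lborel. a - h s) = (LINT s:{0..t}|lborel. a) - (LINT s:{0..t}|lborel. h s)"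
    using integrable_on_interval_bounded[OF assms(1,2)] t
    by (intro set_integral_diff) (auto simp: set_integrable_def)
  then show ?thesis using t by (simp add: interval_mean_def set_integral_const field_simps)
qed

lemma interval_mean_square_le:
  fixes h :: "real \<Rightarrow> real"
  assumes h: "h \<in> borel_measurable lborel" "\<And>s. s \<in> {0..t} \<Longrightarrow> \<bar>h s\<bar> \<le> c" and t: "0 < t"
  shows "(interval_mean t h)\<^sup>2 \<le> interval_mean t (\<lambda>s. (h s)\<^sup>2)"
proof -
  define A where "A = (LINT s:{0..t}|lborel. h s)"
  define Q where "Q = (LINT s:{0..t}|lborel. (h s)\<^sup>2)"
  define m where "m = A / t"
  have "set_integrable lborel {0..t} (\<lambda>s. (h s)\<^sup>2)"
  proof (rule integrable_on_interval_bounded[where c="c * c"])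
    show "\<bar>(h s)\<^sup>2\<bar> \<le> c * c" if "s \<in> {0..t}" for s
    proof -
      have "\<bar>h s\<bar> * \<bar>h s\<bar> \<le> c * c" using h(2)[OF that] by (intro mult_mono) auto
      then show ?thesis by (simp add: power2_eq_square abs_mult)
    qed
  qed (use h(1) in measurable)
  moreover have "set_integrable lborel {0..t} h" "set_integrable lborel {0..t} (\<lambda>_. 1::real)"
    using integrable_on_interval_bounded[OF h] integrable_on_interval_bounded[of "\<lambda>_. 1" t 1] by auto
  ultimately have expand: "(\<integral>s. indicator {0..t} s * (h s)\<^sup>2 - (2 * m) * (indicator {0..t} s * h s) +
      m\<^sup>2 * indicator {0..t} s \<partial>lborel) = Q - (2 * m) * A + m\<^sup>2 * t"
    using t by (simp add: A_def Q_def set_integrable_def set_lebesgue_integral_def)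
  have "0 \<le> (\<integral>s. indicator {0..t} s * (h s - m)\<^sup>2 \<partial>lborel)"
    by (rule Bochner_Integration.integral_nonneg) (auto simp: indicator_def)
  also have "\<dots> = (\<integral>s. indicator {0..t} s * (h s)\<^sup>2 - (2 * m) * (indicator {0..t} s * h s) +
      m\<^sup>2 * indicator {0..t} s \<partial>lborel)"
    by (rule Bochner_Integration.integral_cong[OF refl]) (simp add: power2_diff algebra_simps)
  finally have "0 \<le> Q - (2 * m) * A + m\<^sup>2 * t" unfolding expand .
  then have "A\<^sup>2 / t \<le> Q" using t by (simp add: m_def power2_eq_square field_simps)
  then show ?thesis using t by (simp add: interval_mean_def A_def Q_def power2_eq_square field_simps)
qed

lemma abs_interval_mean_le:
  assumes "0 < t"
  shows "\<bar>interval_mean t h\<bar> \<le> interval_mean t (\<lambda>s. \<bar>h s\<bar>)"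
  unfolding interval_mean_def set_lebesgue_integral_def
  using assms integral_abs_bound[of lborel "\<lambda>s. indicator {0..t} s *\<^sub>R h s"]
  by (simp add: abs_mult divide_right_mono)

lemma (in sigma_finite_measure) nn_integral_interval_mean_le:
  fixes H :: "real \<Rightarrow> 'a \<Rightarrow> real" and K :: real
  assumes H_meas: "(\<lambda>(s, x). H s x) \<in> borel_measurable (lborel \<Otimes>\<^sub>M M)"
    and H_bounds: "\<And>s x. s \<in> {0..t} \<Longrightarrow> x \<in> space M \<Longrightarrow> 0 \<le> H s x \<and> H s x \<le> c"
    and t: "0 < t" and "0 \<le> K"
    and K: "\<And>s. s \<in> {0<..t} \<Longrightarrow> (\<integral>\<^sup>+x. H s x \<partial>M) \<le> K"
  shows "(\<integral>\<^sup>+x. interval_mean t (\<lambda>s. H s x) \<partial>M) \<le> K"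
proof -
  interpret pair_sigma_finite lborel M
    by (simp add: pair_sigma_finite.intro lborel.sigma_finite_measure_axioms sigma_finite_measure_axioms)
  have F_meas: "(\<lambda>(s, x). ennreal (indicator {0..t} s * H s x)) \<in> borel_measurable (lborel \<Otimes>\<^sub>M M)"
    using H_meas by measurable
  have mean_eq: "ennreal (interval_mean t (\<lambda>s. H s x)) =
      ennreal (1 / t) * (\<integral>\<^sup>+s. ennreal (indicator {0..t} s * H s x) \<partial>lborel)" if x: "x \<in> space M" for x
  proof -
    have "(\<lambda>s. H s x) \<in> borel_measurable lborel"
      using measurable_compose[OF measurable_Pair2'[OF x] H_meas] by simp
    then have "set_integrable lborel {0..t} (\<lambda>s. H s x)"
      by (rule integrable_on_interval_bounded[where c=c]) (use H_bounds x in force)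
    then have "(\<integral>\<^sup>+s. ennreal (indicator {0..t} s * H s x) \<partial>lborel) = ennreal (LINT s:{0..t}|lborel. H s x)"
      unfolding set_lebesgue_integral_def set_integrable_def
      by (subst nn_integral_eq_integral) (use H_bounds x in \<open>auto simp: indicator_def\<close>)
    then show ?thesis
      using interval_mean_nonneg[of t "\<lambda>s. H s x"] H_bounds x t
      by (simp add: interval_mean_def ennreal_mult[symmetric] zero_le_divide_iff)
  qed
  have "(\<integral>\<^sup>+x. interval_mean t (\<lambda>s. H s x) \<partial>M) =
      (\<integral>\<^sup>+x. ennreal (1 / t) * (\<integral>\<^sup>+s. ennreal (indicator {0..t} s * H s x) \<partial>lborel) \<partial>M)"
    by (rule nn_integral_cong) (rule mean_eq)
  also have "\<dots> = ennreal (1 / t) * (\<integral>\<^sup>+x. (\<integral>\<^sup>+s. ennreal (indicator {0..t} s * H s x) \<partial>lborel) \<partial>M)"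
    by (rule nn_integral_cmult) (use F_meas in measurable)
  also have "(\<integral>\<^sup>+x. (\<integral>\<^sup>+s. ennreal (indicator {0..t} s * H s x) \<partial>lborel) \<partial>M) =
      (\<integral>\<^sup>+s. (\<integral>\<^sup>+x. ennreal (indicator {0..t} s * H s x) \<partial>M) \<partial>lborel)"
    by (rule Fubini'[OF F_meas])
  also have "\<dots> \<le> (\<integral>\<^sup>+s. ennreal K * indicator {0..t} s \<partial>lborel)"
  proof (rule nn_integral_mono_AE)
    show "AE s in lborel. (\<integral>\<^sup>+x. ennreal (indicator {0..t} s * H s x) \<partial>M) \<le> ennreal K * indicator {0..t} s"
      using AE_lborel_singleton[of 0] by eventually_elim (use K in \<open>auto simp: indicator_def\<close>)
  qed
  also have "\<dots> = ennreal (K * t)"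
    using t \<open>0 \<le> K\<close> by (simp add: nn_integral_cmult_indicator ennreal_mult)
  finally show ?thesis
    using t \<open>0 \<le> K\<close> by (simp add: ennreal_mult''[symmetric] mult_left_mono)
qed

lemma borel_measurable_interval_mean:
  fixes H :: "real \<Rightarrow> 'a \<Rightarrow> real"
  assumes "(\<lambda>(s, x). H s x) \<in> borel_measurable (lborel \<Otimes>\<^sub>M M)"
  shows "(\<lambda>x. interval_mean t (\<lambda>s. H s x)) \<in> borel_measurable M"
proof -
  have "(\<lambda>(x, s). indicator {0..t} s *\<^sub>R H s x) \<in> borel_measurable (M \<Otimes>\<^sub>M lborel)"
    using measurable_comp[OF measurable_pair_swap' assms] by (simp add: comp_def case_prod_beta)
  then have "(\<lambda>x. LINT s|lborel. indicator {0..t} s *\<^sub>R H s x) \<in> borel_measurable M"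
    by (rule lborel.borel_measurable_lebesgue_integral)
  then show ?thesis by (simp add: interval_mean_def set_lebesgue_integral_def)
qed

section \<open>Truncation and the set \<open>D\<close>\<close>

lemma Dset_nonneg_bounded:
  assumes "u \<in> Dset M"
  obtains B where "\<And>x. x \<in> space M \<Longrightarrow> 0 \<le> u x \<and> u x \<le> B"
proof -
  obtain B where "\<forall>x\<in>space M. \<bar>u x\<bar> \<le> B"
    using assms unfolding Dset_def bdd_meas_def by blast
  then have "\<forall>x\<in>space M. 0 \<le> u x \<and> u x \<le> B" using assms by (auto simp: Dset_def abs_le_iff)
  then show thesis using that by blast
qed

lemma Dset_measurable: "u \<in> Dset M \<Longrightarrow> u \<in> borel_measurable M"
  and Dset_integrable: "u \<in> Dset M \<Longrightarrow> integrable M u"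
  by (auto simp: Dset_def bdd_meas_def)

lemma Dset_bdd_meas: "u \<in> Dset M \<Longrightarrow> bdd_meas M u"
  by (simp add: Dset_def)

lemma L2_Dset:
  assumes u: "u \<in> Dset M"
  shows "L2 M u"
proof -
  obtain B where B: "\<And>x. x \<in> space M \<Longrightarrow> 0 \<le> u x \<and> u x \<le> B"
    using Dset_nonneg_bounded[OF u] by blast
  have "integrable M (\<lambda>x. (u x)\<^sup>2)"
  proof (rule Bochner_Integration.integrable_bound)
    show "integrable M (\<lambda>x. B * u x)" using Dset_integrable[OF u] by simp
    show "(\<lambda>x. (u x)\<^sup>2) \<in> borel_measurable M" using Dset_measurable[OF u] by measurable
    show "AE x in M. norm ((u x)\<^sup>2) \<le> norm (B * u x)"
    proof (rule AE_I2)
      fix x assume "x \<in> space M"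
      then have "0 \<le> u x" "u x \<le> B" using B by auto
      then show "norm ((u x)\<^sup>2) \<le> norm (B * u x)" by (simp add: power2_eq_square mult_right_mono)
    qed
  qed
  then show ?thesis using Dset_measurable[OF u] by (simp add: L2_def)
qed

definition truncation :: "nat \<Rightarrow> ('a \<Rightarrow> real) \<Rightarrow> 'a \<Rightarrow> real" where
  "truncation n f x = (if 1 / real (Suc n) \<le> f x then min (f x) (real (Suc n)) else 0)"

lemma truncation_nonneg: "0 \<le> truncation n f x"
proof (cases "1 / real (Suc n) \<le> f x")
  case True
  moreover have "0 < 1 / real (Suc n)" by simp
  ultimately have "0 \<le> f x" by linarith
  then show ?thesis by (simp add: truncation_def)
qed (simp add: truncation_def)

lemma truncation_le: "truncation n f x \<le> Suc n"
  by (auto simp: truncation_def)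

lemma truncation_le_abs: "truncation n f x \<le> \<bar>f x\<bar>"
  by (auto simp: truncation_def)

lemma abs_diff_truncation_le: "\<bar>f x - truncation n f x\<bar> \<le> \<bar>f x\<bar>"
  using truncation_nonneg[of n f x] by (auto simp: truncation_def)

lemma truncation_le_square: "truncation n f x \<le> real (Suc n) * (f x)\<^sup>2"
proof (cases "1 / real (Suc n) \<le> f x")
  case True
  moreover have "0 < 1 / real (Suc n)" by simp
  ultimately have "0 < f x" by linarith
  have "1 \<le> real (Suc n) * f x" using True by (simp add: field_simps)
  then have "f x \<le> real (Suc n) * f x * f x" using \<open>0 < f x\<close> by (simp add: mult_le_cancel_right1)
  then show ?thesis using True by (simp add: truncation_def power2_eq_square mult.assoc)
qed (simp add: truncation_def)

lemma truncation_LIMSEQ: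
  assumes "0 \<le> f x"
  shows "(\<lambda>n. truncation n f x) \<longlonglongrightarrow> f x"
proof (cases "f x = 0")
  case True
  then show ?thesis by (simp add: truncation_def)
next
  case False
  then have f0: "0 < f x" using assms by simp
  obtain N :: nat where N: "1 / f x < N" "f x < N"
    using reals_Archimedean2[of "max (1 / f x) (f x)"] by auto
  have "truncation n f x = f x" if "N \<le> n" for n
  proof -
    have "1 / f x < Suc n" "f x < Suc n" using N that by linarith+
    then show ?thesis using f0 by (simp add: truncation_def field_simps)
  qed
  then show ?thesis by (intro tendsto_eventually) (auto simp: eventually_sequentially)
qed

lemma borel_measurable_truncation [measurable]:
  assumes [measurable]: "f \<in> borel_measurable M"
  shows "truncation n f \<in> borel_measurable M"
  unfolding truncation_def[abs_def] by measurable

lemma truncation_in_Dset: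
  assumes f: "f \<in> borel_measurable M" and g: "integrable M g" "\<And>x. truncation n f x \<le> g x"
  shows "truncation n f \<in> Dset M"
proof -
  have "integrable M (truncation n f)"
    using g truncation_nonneg[of n f] f
    by (intro Bochner_Integration.integrable_bound[OF g(1)] AE_I2) (auto intro: order_trans[OF _ abs_ge_self])
  then show ?thesis using f truncation_nonneg[of n f] truncation_le[of n f]
    by (auto simp: Dset_def bdd_meas_def intro!: exI[of _ "real (Suc n)"])
qed

lemma truncation_support_finite:
  assumes f: "integrable M f"
  obtains A where "A \<in> sets M" "emeasure M A < \<infinity>" "\<And>x. x \<in> space M - A \<Longrightarrow> truncation n f x = 0"
proof
  let ?A = "{x \<in> space M. 1 / real (Suc n) \<le> f x}"
  show "?A \<in> sets M" using borel_measurable_integrable[OF f] by measurable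
  have "integrable M (indicator ?A :: 'a \<Rightarrow> real)"
  proof (rule Bochner_Integration.integrable_bound)
    show "integrable M (\<lambda>x. real (Suc n) * f x)" using f by simp
    show "AE x in M. norm (indicator ?A x :: real) \<le> norm (real (Suc n) * f x)"
      by (intro AE_I2) (auto simp: indicator_def field_simps)
  qed (use \<open>?A \<in> sets M\<close> in simp)
  then show "emeasure M ?A < \<infinity>"
    using \<open>?A \<in> sets M\<close> by (simp add: integrable_indicator_iff less_top)
  show "truncation n f x = 0" if "x \<in> space M - ?A" for x
    using that by (simp add: truncation_def)
qed

lemma tendsto_integral_square_diff_truncation:
  assumes f: "L2 M f" "AE x in M. 0 \<le> f x"
  shows "(\<lambda>n. \<integral>x. (f x - truncation n f x)\<^sup>2 \<partial>M) \<longlonglongrightarrow> 0"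
proof -
  have "(\<lambda>n. \<integral>x. (f x - truncation n f x)\<^sup>2 \<partial>M) \<longlonglongrightarrow> (\<integral>x. 0 \<partial>M)"
  proof (rule integral_dominated_convergence[where w="\<lambda>x. (f x)\<^sup>2"])
    show "AE x in M. (\<lambda>n. (f x - truncation n f x)\<^sup>2) \<longlonglongrightarrow> 0"
      using f(2)
    proof eventually_elim
      case (elim x)
      have "(\<lambda>n. (f x - truncation n f x)\<^sup>2) \<longlonglongrightarrow> (f x - f x)\<^sup>2"
        by (intro tendsto_intros truncation_LIMSEQ elim)
      then show ?case by simp
    qed
    show "AE x in M. norm ((f x - truncation n f x)\<^sup>2) \<le> (f x)\<^sup>2" for n
      using abs_diff_truncation_le[of f _ n] by (intro AE_I2) (simp add: abs_le_square_iff)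
  qed (use f in \<open>auto simp: L2_def\<close>)
  then show ?thesis by simp
qed

lemma tendsto_integral_abs_diff_truncation:
  assumes f: "integrable M f" "AE x in M. 0 \<le> f x"
  shows "(\<lambda>n. \<integral>x. \<bar>f x - truncation n f x\<bar> \<partial>M) \<longlonglongrightarrow> 0"
proof -
  have "(\<lambda>n. \<integral>x. \<bar>f x - truncation n f x\<bar> \<partial>M) \<longlonglongrightarrow> (\<integral>x. 0 \<partial>M)"
  proof (rule integral_dominated_convergence[where w="\<lambda>x. \<bar>f x\<bar>"])
    show "AE x in M. (\<lambda>n. \<bar>f x - truncation n f x\<bar>) \<longlonglongrightarrow> 0"
      using f(2)
    proof eventually_elim
      case (elim x)
      have "(\<lambda>n. \<bar>f x - truncation n f x\<bar>) \<longlonglongrightarrow> \<bar>f x - f x\<bar>"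
        by (intro tendsto_intros truncation_LIMSEQ elim)
      then show ?case by simp
    qed
    show "AE x in M. norm \<bar>f x - truncation n f x\<bar> \<le> \<bar>f x\<bar>" for n
      using abs_diff_truncation_le[of f _ n] by (intro AE_I2) simp
  qed (use f in auto)
  then show ?thesis by simp
qed

definition time_average :: "(real \<Rightarrow> 'a \<Rightarrow> 'a measure) \<Rightarrow> real \<Rightarrow> ('a \<Rightarrow> real) \<Rightarrow> 'a \<Rightarrow> real" where
  "time_average p t u x = interval_mean t (\<lambda>s. ptf p s u x)"

lemma D0set_iff: "g \<in> D0set M p \<longleftrightarrow> (\<exists>u t. u \<in> Dset M \<and> 0 < t \<and> g = time_average p t u)"
  by (auto simp: D0set_def time_average_def interval_mean_def fun_eq_iff)

locale transition_kernel =
  fixes M :: "'a measure" and p :: "real \<Rightarrow> 'a \<Rightarrow> 'a measure"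
  assumes transition_prob: "transition_prob M p"
begin

lemma prob_space_kernel: "0 \<le> s \<Longrightarrow> x \<in> space M \<Longrightarrow> prob_space (p s x)"
  and sets_kernel: "0 \<le> s \<Longrightarrow> x \<in> space M \<Longrightarrow> sets (p s x) = sets M"
  using transition_prob unfolding transition_prob_def by auto

lemma measurable_kernel:
  "(\<lambda>(s, x). p s x) \<in> restrict_space borel {0..} \<Otimes>\<^sub>M M \<rightarrow>\<^sub>M subprob_algebra M"
proof (rule measurable_subprob_algebra)
  fix a :: "real \<times> 'a" assume "a \<in> space (restrict_space borel {0..} \<Otimes>\<^sub>M M)"
  then have "0 \<le> fst a" "snd a \<in> space M" by (auto simp: space_pair_measure space_restrict_space)
  then show "subprob_space ((\<lambda>(s, x). p s x) a)" "sets ((\<lambda>(s, x). p s x) a) = sets M"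
    using prob_space_kernel sets_kernel by (auto simp: case_prod_beta prob_space_imp_subprob_space)
next
  fix A assume A: "A \<in> sets M"
  have "(\<lambda>(s, x). measure (p s x) A) \<in> borel_measurable (restrict_space borel {0..} \<Otimes>\<^sub>M M)"
    using transition_prob A unfolding transition_prob_def by blast
  then have "(\<lambda>a. ennreal ((\<lambda>(s, x). measure (p s x) A) a)) \<in> borel_measurable (restrict_space borel {0..} \<Otimes>\<^sub>M M)"
    by (rule measurable_compose[OF _ measurable_ennreal])
  then show "(\<lambda>a. emeasure ((\<lambda>(s, x). p s x) a) A) \<in> borel_measurable (restrict_space borel {0..} \<Otimes>\<^sub>M M)"
  proof (rule measurable_cong[THEN iffD1, rotated])
    fix a :: "real \<times> 'a" assume "a \<in> space (restrict_space borel {0..} \<Otimes>\<^sub>M M)"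
    then have "prob_space (p (fst a) (snd a))"
      by (intro prob_space_kernel) (auto simp: space_pair_measure space_restrict_space)
    then show "ennreal ((\<lambda>(s, x). measure (p s x) A) a) = emeasure ((\<lambda>(s, x). p s x) a) A"
      by (simp add: case_prod_beta prob_space.finite_measure finite_measure.emeasure_eq_measure)
  qed
qed

text \<open>Clamping the time at \<open>0\<close> makes \<open>s \<mapsto> p\<^sub>s u\<close> a jointly measurable function on all of \<open>lborel \<Otimes> M\<close>.\<close>

lemma measurable_ptf:
  assumes "u \<in> borel_measurable M"
  shows "(\<lambda>(s, x). ptf p (max 0 s) u x) \<in> borel_measurable (lborel \<Otimes>\<^sub>M M)"
proof -
  have clamp: "(\<lambda>(s::real, x). (max 0 s, x)) \<in> lborel \<Otimes>\<^sub>M M \<rightarrow>\<^sub>M restrict_space borel {0..} \<Otimes>\<^sub>M M"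
    by (intro measurable_pair measurable_restrict_space2) (auto simp: comp_def case_prod_beta)
  have "(\<lambda>a. integral\<^sup>L ((\<lambda>(s, x). p s x) a) u) \<in> borel_measurable (restrict_space borel {0..} \<Otimes>\<^sub>M M)"
    using measurable_compose[OF measurable_kernel integral_measurable_subprob_algebra[OF assms]] .
  from measurable_compose[OF clamp this] show ?thesis
    by (simp add: ptf_def case_prod_beta)
qed

lemma borel_measurable_ptf:
  assumes "u \<in> borel_measurable M" "0 \<le> s"
  shows "ptf p s u \<in> borel_measurable M"
  using measurable_compose[OF measurable_Pair1'[of s lborel M] measurable_ptf[OF assms(1)]] assms(2)
  by (simp add: max_absorb2)

lemma ptf_bounds:
  assumes f: "f \<in> borel_measurable M" and ab: "\<And>y. y \<in> space M \<Longrightarrow> a \<le> f y \<and> f y \<le> b"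
    and s: "0 \<le> s" and x: "x \<in> space M"
  shows "a \<le> ptf p s f x \<and> ptf p s f x \<le> b"
proof -
  interpret P: prob_space "p s x" using prob_space_kernel[OF s x] .
  have sp: "space (p s x) = space M" using sets_eq_imp_space_eq[OF sets_kernel[OF s x]] .
  have "f \<in> borel_measurable (p s x)" using f measurable_cong_sets[OF sets_kernel[OF s x] refl] by blast
  moreover have "AE y in p s x. norm (f y) \<le> \<bar>a\<bar> + \<bar>b\<bar>"
  proof (rule AE_I2)
    fix y assume "y \<in> space (p s x)"
    then have "a \<le> f y \<and> f y \<le> b" using ab sp by auto
    then show "norm (f y) \<le> \<bar>a\<bar> + \<bar>b\<bar>" by simp arith
  qed
  ultimately have "integrable (p s x) f" by (rule P.integrable_const_bound[rotated])
  then have "(\<integral>y. a \<partial>p s x) \<le> (\<integral>y. f y \<partial>p s x) \<and> (\<integral>y. f y \<partial>p s x) \<le> (\<integral>y. b \<partial>p s x)"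
    using ab sp by (intro conjI integral_mono) auto
  moreover have "measure (p s x) (space M) = 1" using P.prob_space sp by simp
  ultimately show ?thesis by (simp add: ptf_def sp)
qed

lemma time_average_clamped: "time_average p t u x = interval_mean t (\<lambda>s. ptf p (max 0 s) u x)"
  unfolding time_average_def by (rule interval_mean_cong) simp

lemma borel_measurable_ptf_time:
  "u \<in> borel_measurable M \<Longrightarrow> x \<in> space M \<Longrightarrow> (\<lambda>s. ptf p (max 0 s) u x) \<in> borel_measurable lborel"
  using measurable_compose[OF measurable_Pair2' measurable_ptf] by simp

lemma borel_measurable_time_average:
  "u \<in> borel_measurable M \<Longrightarrow> time_average p t u \<in> borel_measurable M"
  using borel_measurable_interval_mean[OF measurable_ptf] by (simp add: time_average_clamped[abs_def])

lemma time_average_nonneg: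
  assumes "u \<in> borel_measurable M" "\<And>y. y \<in> space M \<Longrightarrow> 0 \<le> u y \<and> u y \<le> B" "0 \<le> t" "x \<in> space M"
  shows "0 \<le> time_average p t u x"
  unfolding time_average_def using assms ptf_bounds[OF assms(1,2)] by (intro interval_mean_nonneg) auto

lemma diff_time_average:
  assumes u: "u \<in> borel_measurable M" "\<And>y. y \<in> space M \<Longrightarrow> 0 \<le> u y \<and> u y \<le> B"
    and t: "0 < t" and x: "x \<in> space M"
  shows "a - time_average p t u x = interval_mean t (\<lambda>s. a - ptf p (max 0 s) u x)"
  unfolding time_average_clamped
  by (rule interval_mean_const_diff[OF borel_measurable_ptf_time[OF u(1) x] _ t, where c=B, symmetric])
     (use ptf_bounds[OF u] x in force)

lemma square_diff_time_average_le:
  assumes u: "u \<in> borel_measurable M" "\<And>y. y \<in> space M \<Longrightarrow> 0 \<le> u y \<and> u y \<le> B"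
    and t: "0 < t" and x: "x \<in> space M"
  shows "(a - time_average p t u x)\<^sup>2 \<le> interval_mean t (\<lambda>s. (a - ptf p s u x)\<^sup>2)"
proof -
  have "(a - time_average p t u x)\<^sup>2 = (interval_mean t (\<lambda>s. a - ptf p (max 0 s) u x))\<^sup>2"
    using diff_time_average[OF u t x] by simp
  also have "\<dots> \<le> interval_mean t (\<lambda>s. (a - ptf p (max 0 s) u x)\<^sup>2)"
  proof (rule interval_mean_square_le[OF _ _ t])
    show "(\<lambda>s. a - ptf p (max 0 s) u x) \<in> borel_measurable lborel"
      using borel_measurable_ptf_time[OF u(1) x] by simp
    fix s
    have "0 \<le> ptf p (max 0 s) u x \<and> ptf p (max 0 s) u x \<le> B" using ptf_bounds[OF u _ x] by simp
    then show "\<bar>a - ptf p (max 0 s) u x\<bar> \<le> \<bar>a\<bar> + B" by arith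
  qed
  also have "\<dots> = interval_mean t (\<lambda>s. (a - ptf p s u x)\<^sup>2)"
    by (rule interval_mean_cong) simp
  finally show ?thesis .
qed

lemma abs_diff_time_average_le:
  assumes u: "u \<in> borel_measurable M" "\<And>y. y \<in> space M \<Longrightarrow> 0 \<le> u y \<and> u y \<le> B"
    and t: "0 < t" and x: "x \<in> space M"
  shows "\<bar>a - time_average p t u x\<bar> \<le> interval_mean t (\<lambda>s. \<bar>a - ptf p s u x\<bar>)"
proof -
  have "\<bar>a - time_average p t u x\<bar> = \<bar>interval_mean t (\<lambda>s. a - ptf p (max 0 s) u x)\<bar>"
    using diff_time_average[OF u t x] by simp
  also have "\<dots> \<le> interval_mean t (\<lambda>s. \<bar>a - ptf p (max 0 s) u x\<bar>)"
    by (rule abs_interval_mean_le[OF t])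
  also have "\<dots> = interval_mean t (\<lambda>s. \<bar>a - ptf p s u x\<bar>)"
    by (rule interval_mean_cong) simp
  finally show ?thesis .
qed

end

section \<open>Strongly continuous semigroups on \<open>L\<^sub>2\<close>\<close>

locale L2_semigroup =
  fixes M :: "'a measure" and T :: "real \<Rightarrow> ('a \<Rightarrow> real) \<Rightarrow> ('a \<Rightarrow> real)"
  assumes strongly_cont_semigroup: "strongly_cont_semigroup_L2 M T"
begin

lemma L2_T: "0 \<le> t \<Longrightarrow> L2 M f \<Longrightarrow> L2 M (T t f)"
  and T_bounded: "0 \<le> t \<Longrightarrow> \<exists>C. \<forall>f. L2 M f \<longrightarrow> (\<integral>x. (T t f x)\<^sup>2 \<partial>M) \<le> C * (\<integral>x. (f x)\<^sup>2 \<partial>M)"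
  and T_zero: "L2 M f \<Longrightarrow> AE x in M. T 0 f x = f x"
  and T_add: "0 \<le> s \<Longrightarrow> 0 \<le> t \<Longrightarrow> L2 M f \<Longrightarrow> AE x in M. T (s + t) f x = T s (T t f) x"
  and tendsto_T: "L2 M f \<Longrightarrow> ((\<lambda>t. \<integral>x. (T t f x - f x)\<^sup>2 \<partial>M) \<longlongrightarrow> 0) (at_right 0)"
  using strongly_cont_semigroup unfolding strongly_cont_semigroup_L2_def by auto

lemma integral_square_T_eq:
  assumes "0 \<le> s" "0 \<le> t" "L2 M f"
  shows "(\<integral>x. (T (s + t) f x)\<^sup>2 \<partial>M) = (\<integral>x. (T s (T t f) x)\<^sup>2 \<partial>M)"
  using L2_T[of "s + t" f] L2_T[OF assms(1) L2_T[OF assms(2,3)]] T_add[OF assms] assms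
  by (intro integral_cong_AE) (auto simp: L2_def)

lemma T_bounded_near_zero:
  assumes f: "L2 M f"
  obtains d K where "0 < d" "\<And>s. s \<in> {0..d} \<Longrightarrow> (\<integral>x. (T s f x)\<^sup>2 \<partial>M) \<le> K"
proof -
  have "\<forall>\<^sub>F s in at_right 0. (\<integral>x. (T s f x - f x)\<^sup>2 \<partial>M) < 1"
    using order_tendstoD(2)[OF tendsto_T[OF f]] by simp
  then obtain b where b: "0 < b" "\<And>s. 0 < s \<Longrightarrow> s < b \<Longrightarrow> (\<integral>x. (T s f x - f x)\<^sup>2 \<partial>M) < 1"
    unfolding eventually_at_right[OF zero_less_one] by auto
  have "(\<integral>x. (T s f x)\<^sup>2 \<partial>M) \<le> 2 + 2 * (\<integral>x. (f x)\<^sup>2 \<partial>M)" if s: "s \<in> {0..b/2}" for s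
  proof (cases "s = 0")
    case True
    have "(\<integral>x. (T 0 f x)\<^sup>2 \<partial>M) = (\<integral>x. (f x)\<^sup>2 \<partial>M)"
      using f L2_T[of 0 f] T_zero[OF f] by (intro integral_cong_AE) (auto simp: L2_def)
    then show ?thesis using True by simp
  next
    case False
    then have "(\<integral>x. (T s f x - f x)\<^sup>2 \<partial>M) < 1" using s b by auto
    moreover have "(\<integral>x. (T s f x - 0)\<^sup>2 \<partial>M) \<le> 2 * (\<integral>x. (T s f x - f x)\<^sup>2 \<partial>M) + 2 * (\<integral>x. (f x - 0)\<^sup>2 \<partial>M)"
      using s by (intro integral_square_diff_triangle L2_T f) (auto simp: L2_def)
    ultimately show ?thesis by simp
  qed
  then show thesis using that[of "b/2"] b by auto
qed

text \<open>Iterating \<open>T\<^sub>s = T\<^sub>d T\<^sub>s\<^sub>-\<^sub>d\<close> from a bound on \<open>[0, d]\<close> gives a bound on \<open>[0, (n + 1) d]\<close>.\<close>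

lemma T_locally_bounded:
  assumes f: "L2 M f" and "0 \<le> t"
  obtains K where "\<And>s. s \<in> {0..t} \<Longrightarrow> (\<integral>x. (T s f x)\<^sup>2 \<partial>M) \<le> K"
proof -
  obtain d K where d: "0 < d" and K: "\<And>s. s \<in> {0..d} \<Longrightarrow> (\<integral>x. (T s f x)\<^sup>2 \<partial>M) \<le> K"
    using T_bounded_near_zero[OF f] by blast
  obtain C where C: "\<And>g. L2 M g \<Longrightarrow> (\<integral>x. (T d g x)\<^sup>2 \<partial>M) \<le> C * (\<integral>x. (g x)\<^sup>2 \<partial>M)"
    using T_bounded[of d] d by auto
  define C' where "C' = max C 1"
  have bound: "(\<integral>x. (T s f x)\<^sup>2 \<partial>M) \<le> max K 0 * C' ^ n" if "s \<in> {0..real n * d + d}" for n s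
    using that
  proof (induction n arbitrary: s)
    case 0
    then show ?case using K by fastforce
  next
    case (Suc n)
    have mono: "max K 0 * C' ^ n \<le> max K 0 * C' ^ Suc n"
      by (intro mult_left_mono power_increasing) (auto simp: C'_def)
    show ?case
    proof (cases "s \<le> real n * d + d")
      case True
      then show ?thesis using Suc mono by force
    next
      case False
      have "0 \<le> real n * d" using d by simp
      then have s_ge: "0 \<le> s - d" using False by linarith
      have "s \<le> real n * d + d + d" using Suc.prems by (simp add: algebra_simps)
      then have s_mem: "s - d \<in> {0..real n * d + d}" using s_ge by auto
      have "(\<integral>x. (T s f x)\<^sup>2 \<partial>M) = (\<integral>x. (T d (T (s - d) f) x)\<^sup>2 \<partial>M)"
        using integral_square_T_eq[of d "s - d"] d s_ge f by simp
      also have "\<dots> \<le> C' * (\<integral>x. (T (s - d) f x)\<^sup>2 \<partial>M)"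
        by (rule order_trans[OF C[OF L2_T[OF s_ge f]]]) (auto simp: C'_def intro: mult_right_mono)
      also have "\<dots> \<le> C' * (max K 0 * C' ^ n)"
        using Suc.IH[OF s_mem] by (intro mult_left_mono) (auto simp: C'_def)
      finally show ?thesis by (simp add: algebra_simps)
    qed
  qed
  obtain n :: nat where "t / d \<le> real n" using real_arch_simple by blast
  then have "t \<le> real n * d + d" using d by (simp add: field_simps)
  then show thesis using that[of "max K 0 * C' ^ n"] bound[of _ n] by auto
qed

end

section \<open>Density of \<open>D\<^sub>0\<close> in \<open>L\<^sub>2\<^sup>+\<close>\<close>

locale kernel_semigroup = sigma_finite_measure M + transition_kernel M p + L2_semigroup M T
  for M :: "'a measure" and p T +
  assumes ptf_eq_T: "\<And>t f. 0 \<le> t \<Longrightarrow> bdd_meas M f \<Longrightarrow> integrable M (\<lambda>x. (f x)\<^sup>2) \<Longrightarrow>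
    AE x in M. ptf p t f x = T t f x"
begin

lemma ptf_eq_T_Dset: "u \<in> Dset M \<Longrightarrow> 0 \<le> s \<Longrightarrow> AE x in M. ptf p s u x = T s u x"
  using ptf_eq_T[OF _ Dset_bdd_meas] L2_Dset[of u M] by (simp add: L2_def)

lemma L2_ptf:
  assumes u: "u \<in> Dset M" and s: "0 \<le> s"
  shows "L2 M (ptf p s u)"
proof -
  have "L2 M (T s u)" using L2_T[OF s L2_Dset[OF u]] .
  moreover have "ptf p s u \<in> borel_measurable M"
    using borel_measurable_ptf[OF Dset_measurable[OF u] s] .
  ultimately show ?thesis
    using ptf_eq_T_Dset[OF u s] unfolding L2_def by (auto intro: integrable_cong_AE_imp)
qed

lemma nn_integral_ptf_eq_T:
  fixes \<phi> :: "real \<Rightarrow> real \<Rightarrow> real"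
  assumes u: "u \<in> Dset M" and s: "0 \<le> s"
    and [measurable]: "(\<lambda>(a, b). \<phi> a b) \<in> borel_measurable (borel \<Otimes>\<^sub>M borel)"
    and integrable: "integrable M (\<lambda>x. \<phi> (u x) (T s u x))" and nonneg: "\<And>a b. 0 \<le> \<phi> a b"
  shows "(\<integral>\<^sup>+x. \<phi> (u x) (ptf p s u x) \<partial>M) = (\<integral>x. \<phi> (u x) (T s u x) \<partial>M)"
proof -
  have "(\<integral>\<^sup>+x. \<phi> (u x) (ptf p s u x) \<partial>M) = (\<integral>\<^sup>+x. \<phi> (u x) (T s u x) \<partial>M)"
    using ptf_eq_T_Dset[OF u s] by (intro nn_integral_cong_AE) auto
  also have "\<dots> = (\<integral>x. \<phi> (u x) (T s u x) \<partial>M)"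
    using integrable nonneg by (intro nn_integral_eq_integral) auto
  finally show ?thesis .
qed

lemma nn_integral_time_average_le:
  fixes \<phi> :: "real \<Rightarrow> real \<Rightarrow> real" and K :: real
  assumes u: "u \<in> borel_measurable M" "\<And>y. y \<in> space M \<Longrightarrow> 0 \<le> u y \<and> u y \<le> B"
    and [measurable]: "(\<lambda>(a, b). \<phi> a b) \<in> borel_measurable (borel \<Otimes>\<^sub>M borel)"
    and \<phi>_bounds: "\<And>a b. 0 \<le> a \<Longrightarrow> a \<le> B \<Longrightarrow> 0 \<le> b \<Longrightarrow> b \<le> B \<Longrightarrow> 0 \<le> \<phi> a b \<and> \<phi> a b \<le> c"
    and t: "0 < t" and "0 \<le> K"
    and K: "\<And>s. s \<in> {0<..t} \<Longrightarrow> (\<integral>\<^sup>+x. \<phi> (u x) (ptf p s u x) \<partial>M) \<le> K"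
  shows "(\<integral>\<^sup>+x. interval_mean t (\<lambda>s. \<phi> (u x) (ptf p s u x)) \<partial>M) \<le> K"
proof -
  have [measurable]: "(\<lambda>(s, x). ptf p (max 0 s) u x) \<in> borel_measurable (lborel \<Otimes>\<^sub>M M)"
    using measurable_ptf[OF u(1)] .
  have "(\<integral>\<^sup>+x. interval_mean t (\<lambda>s. \<phi> (u x) (ptf p (max 0 s) u x)) \<partial>M) \<le> K"
  proof (rule nn_integral_interval_mean_le[OF _ _ t \<open>0 \<le> K\<close>])
    show "(\<lambda>(s, x). \<phi> (u x) (ptf p (max 0 s) u x)) \<in> borel_measurable (lborel \<Otimes>\<^sub>M M)"
      using u(1) by measurable
    show "0 \<le> \<phi> (u x) (ptf p (max 0 s) u x) \<and> \<phi> (u x) (ptf p (max 0 s) u x) \<le> c"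
      if "s \<in> {0..t}" "x \<in> space M" for s x
      using that u(2)[of x] ptf_bounds[OF u, of "max 0 s" x] by (intro \<phi>_bounds) auto
    show "(\<integral>\<^sup>+x. \<phi> (u x) (ptf p (max 0 s) u x) \<partial>M) \<le> K" if "s \<in> {0<..t}" for s
      using K[OF that] that by simp
  qed
  moreover have "interval_mean t (\<lambda>s. \<phi> (u x) (ptf p (max 0 s) u x)) = interval_mean t (\<lambda>s. \<phi> (u x) (ptf p s u x))" for x
    by (rule interval_mean_cong) simp
  ultimately show ?thesis by simp
qed

lemma L2_time_average:
  assumes u: "u \<in> Dset M" and t: "0 < t"
  shows "L2 M (time_average p t u)"
proof -
  obtain B where B: "\<And>y. y \<in> space M \<Longrightarrow> 0 \<le> u y \<and> u y \<le> B"
    using Dset_nonneg_bounded[OF u] by blast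
  note u' = Dset_measurable[OF u] B
  obtain K where K: "\<And>s. s \<in> {0..t} \<Longrightarrow> (\<integral>x. (T s u x)\<^sup>2 \<partial>M) \<le> K"
    using T_locally_bounded[OF L2_Dset[OF u]] t by (metis less_imp_le)
  have "(\<integral>\<^sup>+x. (time_average p t u x)\<^sup>2 \<partial>M) \<le> (\<integral>\<^sup>+x. interval_mean t (\<lambda>s. (ptf p s u x)\<^sup>2) \<partial>M)"
    using square_diff_time_average_le[OF u' t, of _ 0] by (intro nn_integral_mono ennreal_leI) simp
  also have "\<dots> \<le> max K 0"
  proof (rule nn_integral_time_average_le[where \<phi>="\<lambda>_ b. b\<^sup>2" and c="B\<^sup>2", OF u'(1) B _ _ t])
    show "0 \<le> b\<^sup>2 \<and> b\<^sup>2 \<le> B\<^sup>2" if "0 \<le> b" "b \<le> B" for b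
      using that by (auto intro: power_mono)
    fix s assume s: "s \<in> {0<..t}"
    have "(\<integral>\<^sup>+x. (ptf p s u x)\<^sup>2 \<partial>M) = (\<integral>x. (T s u x)\<^sup>2 \<partial>M)"
      using nn_integral_ptf_eq_T[OF u, where \<phi>="\<lambda>_ b. b\<^sup>2"] L2_T[OF _ L2_Dset[OF u], of s] s
      by (simp add: L2_def)
    also have "\<dots> \<le> max K 0" using K[of s] s by (intro ennreal_leI) auto
    finally show "(\<integral>\<^sup>+x. (ptf p s u x)\<^sup>2 \<partial>M) \<le> max K 0" by simp
  qed auto
  finally have "integrable M (\<lambda>x. (time_average p t u x)\<^sup>2)"
    using borel_measurable_time_average[OF u'(1)] by (intro integrableI_nonneg) (auto simp: top.not_eq_extremum le_less_trans)
  then show ?thesis using borel_measurable_time_average[OF u'(1)] by (simp add: L2_def)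
qed

lemma integral_square_diff_time_average_le:
  assumes u: "u \<in> Dset M" and t: "0 < t" and "0 \<le> e"
    and e: "\<And>s. s \<in> {0<..t} \<Longrightarrow> (\<integral>x. (T s u x - u x)\<^sup>2 \<partial>M) \<le> e"
  shows "(\<integral>x. (u x - time_average p t u x)\<^sup>2 \<partial>M) \<le> e"
proof -
  obtain B where B: "\<And>y. y \<in> space M \<Longrightarrow> 0 \<le> u y \<and> u y \<le> B"
    using Dset_nonneg_bounded[OF u] by blast
  note u_meas = Dset_measurable[OF u]
  have "ennreal (\<integral>x. (u x - time_average p t u x)\<^sup>2 \<partial>M) = (\<integral>\<^sup>+x. (u x - time_average p t u x)\<^sup>2 \<partial>M)"
    using integrable_square_diff[OF L2_Dset[OF u] L2_time_average[OF u t]]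
    by (intro nn_integral_eq_integral[symmetric]) auto
  also have "\<dots> \<le> (\<integral>\<^sup>+x. interval_mean t (\<lambda>s. (u x - ptf p s u x)\<^sup>2) \<partial>M)"
    using square_diff_time_average_le[OF u_meas B t] by (intro nn_integral_mono ennreal_leI) simp
  also have "\<dots> \<le> e"
  proof (rule nn_integral_time_average_le[where \<phi>="\<lambda>a b. (a - b)\<^sup>2" and c="B\<^sup>2", OF u_meas B _ _ t])
    show "0 \<le> (a - b)\<^sup>2 \<and> (a - b)\<^sup>2 \<le> B\<^sup>2" if "0 \<le> a" "a \<le> B" "0 \<le> b" "b \<le> B" for a b
      using that by (auto simp: abs_le_square_iff[symmetric])
    fix s assume s: "s \<in> {0<..t}"
    have "(\<integral>\<^sup>+x. (u x - ptf p s u x)\<^sup>2 \<partial>M) = (\<integral>x. (u x - T s u x)\<^sup>2 \<partial>M)"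
      using s integrable_square_diff[OF L2_Dset[OF u] L2_T[OF _ L2_Dset[OF u]], of s]
      by (intro nn_integral_ptf_eq_T[OF u, where \<phi>="\<lambda>a b. (a - b)\<^sup>2"]) auto
    also have "\<dots> \<le> e" using e[OF s] by (intro ennreal_leI) (simp add: power2_commute)
    finally show "(\<integral>\<^sup>+x. (u x - ptf p s u x)\<^sup>2 \<partial>M) \<le> e" .
  qed (use \<open>0 \<le> e\<close> in auto)
  finally show ?thesis using \<open>0 \<le> e\<close> by (simp add: ennreal_le_iff)
qed

lemma tendsto_integral_square_diff_time_average:
  assumes u: "u \<in> Dset M"
  shows "((\<lambda>t. \<integral>x. (u x - time_average p t u x)\<^sup>2 \<partial>M) \<longlongrightarrow> 0) (at_right 0)"
  using tendsto_T[OF L2_Dset[OF u]]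
  by (rule tendsto_at_right_0_by_running_bound) (auto intro: integral_square_diff_time_average_le[OF u])

lemma D0set_L2:
  assumes "g \<in> D0set M p"
  shows "L2 M g \<and> (AE x in M. 0 \<le> g x)"
proof -
  obtain u t where u: "u \<in> Dset M" and t: "0 < t" and g: "g = time_average p t u"
    using assms unfolding D0set_iff by blast
  obtain B where B: "\<And>y. y \<in> space M \<Longrightarrow> 0 \<le> u y \<and> u y \<le> B"
    using Dset_nonneg_bounded[OF u] by blast
  show ?thesis
    using L2_time_average[OF u t] time_average_nonneg[OF Dset_measurable[OF u] B] t
    by (auto simp: g intro!: AE_I2)
qed

lemma D0set_dense_L2:
  assumes f: "L2 M f" "AE x in M. 0 \<le> f x" and e: "0 < e"
  shows "\<exists>g\<in>D0set M p. (\<integral>x. (f x - g x)\<^sup>2 \<partial>M) < e"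
proof -
  obtain n where n: "(\<integral>x. (f x - truncation n f x)\<^sup>2 \<partial>M) < e / 4"
    using order_tendstoD(2)[OF tendsto_integral_square_diff_truncation[OF f], of "e / 4"] e
    by (auto simp: eventually_sequentially)
  define u where "u = truncation n f"
  have u: "u \<in> Dset M"
    unfolding u_def using f(1)
    by (intro truncation_in_Dset[where g="\<lambda>x. real (Suc n) * (f x)\<^sup>2"] truncation_le_square) (auto simp: L2_def)
  obtain t where t: "0 < t" and ut: "(\<integral>x. (u x - time_average p t u x)\<^sup>2 \<partial>M) < e / 4"
    using order_tendstoD(2)[OF tendsto_integral_square_diff_time_average[OF u], of "e / 4"] e
    by (auto elim: eventually_at_right_0E)
  have "(\<integral>x. (f x - time_average p t u x)\<^sup>2 \<partial>M) \<le>
      2 * (\<integral>x. (f x - u x)\<^sup>2 \<partial>M) + 2 * (\<integral>x. (u x - time_average p t u x)\<^sup>2 \<partial>M)"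
    using f(1) L2_Dset[OF u] L2_time_average[OF u t] by (rule integral_square_diff_triangle)
  also have "\<dots> < e" using n ut by (simp add: u_def)
  finally have "(\<integral>x. (f x - time_average p t u x)\<^sup>2 \<partial>M) < e" .
  moreover have "time_average p t u \<in> D0set M p" unfolding D0set_iff using u t by blast
  ultimately show ?thesis by blast
qed

end

section \<open>Density of \<open>D\<^sub>0\<close> in \<open>L\<^sub>1\<^sup>+\<close> for symmetric semigroups\<close>

locale symmetric_kernel_semigroup = kernel_semigroup +
  assumes symmetric: "symmetric_semigroup_L2 M T"
begin

text \<open>Symmetry moves \<open>p\<^sub>s\<close> onto the indicator: \<open>\<integral> (p\<^sub>s u) 1\<^sub>A = \<integral> u (p\<^sub>s 1\<^sub>A) \<le> \<integral> u\<close>.\<close>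

lemma integral_ptf_indicator_le:
  assumes u: "u \<in> Dset M" and s: "0 \<le> s" and A: "A \<in> sets M" "emeasure M A < \<infinity>"
  shows "(\<integral>x. ptf p s u x * indicator A x \<partial>M) \<le> (\<integral>x. u x \<partial>M)"
proof -
  obtain B where B: "\<And>y. y \<in> space M \<Longrightarrow> 0 \<le> u y \<and> u y \<le> B"
    using Dset_nonneg_bounded[OF u] by blast
  note u_meas = Dset_measurable[OF u]
  have ind_meas: "(indicator A :: 'a \<Rightarrow> real) \<in> borel_measurable M" using A by simp
  have ind_square: "integrable M (\<lambda>x. (indicator A x :: real)\<^sup>2)"
  proof -
    have "(\<lambda>x. (indicator A x :: real)\<^sup>2) = indicator A" by (auto simp: fun_eq_iff indicator_def)
    then show ?thesis using A by (simp add: less_top)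
  qed
  have ind_L2: "L2 M (indicator A)" and ind_bdd: "bdd_meas M (indicator A)"
    using ind_meas ind_square by (auto simp: L2_def bdd_meas_def intro!: exI[of _ 1])
  have T_meas: "T s v \<in> borel_measurable M" if "L2 M v" for v
    using L2_T[OF s that] by (simp add: L2_def)
  have "(\<integral>x. ptf p s u x * indicator A x \<partial>M) = (\<integral>x. T s u x * indicator A x \<partial>M)"
    using ptf_eq_T_Dset[OF u s] borel_measurable_ptf[OF u_meas s] T_meas[OF L2_Dset[OF u]] ind_meas
    by (intro integral_cong_AE) auto
  also have "\<dots> = (\<integral>x. u x * T s (indicator A) x \<partial>M)"
    using symmetric s L2_Dset[OF u] ind_L2 unfolding symmetric_semigroup_L2_def by blast
  also have "\<dots> = (\<integral>x. u x * ptf p s (indicator A) x \<partial>M)"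
    using ptf_eq_T[OF s ind_bdd ind_square] u_meas T_meas[OF ind_L2] borel_measurable_ptf[OF ind_meas s]
    by (intro integral_cong_AE) auto
  also have "\<dots> \<le> (\<integral>x. u x \<partial>M)"
  proof (rule integral_mono'[OF Dset_integrable[OF u]])
    fix x assume x: "x \<in> space M"
    have "0 \<le> ptf p s (indicator A) x \<and> ptf p s (indicator A) x \<le> 1"
      by (rule ptf_bounds[OF ind_meas _ s x]) (auto simp: indicator_def)
    then show "u x * ptf p s (indicator A) x \<le> u x" using B[OF x] by (simp add: mult_left_le)
    show "0 \<le> u x" using B[OF x] by simp
  qed
  finally show ?thesis .
qed

lemma nn_integral_ptf_le:
  assumes u: "u \<in> Dset M" and s: "0 \<le> s"
  shows "(\<integral>\<^sup>+x. ptf p s u x \<partial>M) \<le> (\<integral>x. u x \<partial>M)"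
proof (rule nn_integral_le_of_finite_measure_sets)
  obtain B where B: "\<And>y. y \<in> space M \<Longrightarrow> 0 \<le> u y \<and> u y \<le> B"
    using Dset_nonneg_bounded[OF u] by blast
  note P_meas = borel_measurable_ptf[OF Dset_measurable[OF u] s]
  note P_bounds = ptf_bounds[OF Dset_measurable[OF u] B s]
  show "(\<lambda>x. ennreal (ptf p s u x)) \<in> borel_measurable M" using P_meas by simp
  fix A assume A: "A \<in> sets M" "emeasure M A < \<infinity>"
  have "integrable M (\<lambda>x. ptf p s u x * indicator A x)"
  proof (rule Bochner_Integration.integrable_bound)
    show "integrable M (\<lambda>x. B * indicator A x)" using A by (simp add: less_top)
    show "AE x in M. norm (ptf p s u x * indicator A x) \<le> norm (B * indicator A x)"
      using P_bounds by (intro AE_I2) (auto simp: indicator_def intro: order_trans[OF _ abs_ge_self])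
  qed (use P_meas A in simp)
  then have "(\<integral>\<^sup>+x. ptf p s u x * indicator A x \<partial>M) = (\<integral>x. ptf p s u x * indicator A x \<partial>M)"
    using P_bounds by (intro nn_integral_eq_integral AE_I2) (auto simp: indicator_def)
  also have "\<dots> \<le> (\<integral>x. u x \<partial>M)" using integral_ptf_indicator_le[OF u s A] by (rule ennreal_leI)
  finally show "(\<integral>\<^sup>+x. ennreal (ptf p s u x) * indicator A x \<partial>M) \<le> (\<integral>x. u x \<partial>M)"
    by (simp add: indicator_mult_ennreal mult.commute)
qed

lemma integrable_ptf:
  assumes u: "u \<in> Dset M" and s: "0 \<le> s"
  shows "integrable M (ptf p s u)" and "(\<integral>x. ptf p s u x \<partial>M) \<le> (\<integral>x. u x \<partial>M)"
proof -
  obtain B where B: "\<And>y. y \<in> space M \<Longrightarrow> 0 \<le> u y \<and> u y \<le> B"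
    using Dset_nonneg_bounded[OF u] by blast
  note P_bounds = ptf_bounds[OF Dset_measurable[OF u] B s]
  have nn: "(\<integral>\<^sup>+x. ptf p s u x \<partial>M) \<le> (\<integral>x. u x \<partial>M)" by (rule nn_integral_ptf_le[OF u s])
  show int: "integrable M (ptf p s u)"
    using borel_measurable_ptf[OF Dset_measurable[OF u] s] P_bounds nn
    by (intro integrableI_nonneg) (auto intro!: AE_I2 simp: le_less_trans)
  have "ennreal (\<integral>x. ptf p s u x \<partial>M) \<le> (\<integral>x. u x \<partial>M)"
    using nn int P_bounds by (subst nn_integral_eq_integral[symmetric]) (auto intro!: AE_I2)
  moreover have "0 \<le> (\<integral>x. u x \<partial>M)" using B by (intro Bochner_Integration.integral_nonneg) auto
  ultimately show "(\<integral>x. ptf p s u x \<partial>M) \<le> (\<integral>x. u x \<partial>M)" by (simp add: ennreal_le_iff)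
qed

lemma integrable_time_average:
  assumes u: "u \<in> Dset M" and t: "0 < t"
  shows "integrable M (time_average p t u)"
proof -
  obtain B where B: "\<And>y. y \<in> space M \<Longrightarrow> 0 \<le> u y \<and> u y \<le> B"
    using Dset_nonneg_bounded[OF u] by blast
  note u_meas = Dset_measurable[OF u]
  have "(\<integral>\<^sup>+x. interval_mean t (\<lambda>s. ptf p s u x) \<partial>M) \<le> (\<integral>x. u x \<partial>M)"
    using nn_integral_ptf_le[OF u] B
    by (intro nn_integral_time_average_le[where \<phi>="\<lambda>_ b. b" and c=B, OF u_meas B _ _ t])
       (auto intro: Bochner_Integration.integral_nonneg)
  then show ?thesis
    using borel_measurable_time_average[OF u_meas] time_average_nonneg[OF u_meas B] t
    by (intro integrableI_nonneg) (auto intro!: AE_I2 simp: time_average_def le_less_trans)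
qed

lemma integral_abs_diff_ptf_le:
  assumes u: "u \<in> Dset M" and A: "A \<in> sets M" "emeasure M A < \<infinity>" "\<And>x. x \<in> space M - A \<Longrightarrow> u x = 0"
    and s: "0 \<le> s" and \<eta>: "0 < \<eta>"
  shows "(\<integral>x. \<bar>u x - ptf p s u x\<bar> \<partial>M) \<le> 2 * (\<eta> * measure M A + (1 / \<eta>) * (\<integral>x. (T s u x - u x)\<^sup>2 \<partial>M))"
proof -
  obtain B where B: "\<And>y. y \<in> space M \<Longrightarrow> 0 \<le> u y \<and> u y \<le> B"
    using Dset_nonneg_bounded[OF u] by blast
  have L2_diff: "integrable M (\<lambda>x. (u x - ptf p s u x)\<^sup>2)"
    using integrable_square_diff[OF L2_Dset[OF u] L2_ptf[OF u s]] .
  have "(\<integral>x. \<bar>u x - ptf p s u x\<bar> \<partial>M) \<le> 2 * (\<integral>x. \<bar>u x - ptf p s u x\<bar> * indicator A x \<partial>M)"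
    using Dset_integrable[OF u] integrable_ptf[OF u s] A(1,3) ptf_bounds[OF Dset_measurable[OF u] B s]
    by (intro integral_abs_diff_le_twice_on) auto
  also have "(\<integral>x. \<bar>u x - ptf p s u x\<bar> * indicator A x \<partial>M) \<le>
      \<eta> * measure M A + (1 / \<eta>) * (\<integral>x. (u x - ptf p s u x)\<^sup>2 \<partial>M)"
    using Dset_measurable[OF u] borel_measurable_ptf[OF Dset_measurable[OF u] s] L2_diff A(1,2) \<eta>
    by (intro integral_abs_indicator_le[where w="\<lambda>x. u x - ptf p s u x"]) auto
  also have "(\<integral>x. (u x - ptf p s u x)\<^sup>2 \<partial>M) = (\<integral>x. (T s u x - u x)\<^sup>2 \<partial>M)"
    using ptf_eq_T_Dset[OF u s] L2_diff L2_T[OF s L2_Dset[OF u]] Dset_measurable[OF u]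
    by (intro integral_cong_AE) (auto simp: L2_def power2_commute)
  finally show ?thesis by simp
qed

lemma tendsto_integral_abs_diff_ptf:
  assumes u: "u \<in> Dset M" and A: "A \<in> sets M" "emeasure M A < \<infinity>" "\<And>x. x \<in> space M - A \<Longrightarrow> u x = 0"
  shows "((\<lambda>s. \<integral>x. \<bar>u x - ptf p s u x\<bar> \<partial>M) \<longlongrightarrow> 0) (at_right 0)"
proof (rule order_tendstoI)
  fix a :: real assume "a < 0"
  then show "\<forall>\<^sub>F s in at_right 0. a < (\<integral>x. \<bar>u x - ptf p s u x\<bar> \<partial>M)"
    by (intro always_eventually allI) (simp add: less_le_trans)
next
  fix e :: real assume e: "0 < e"
  define \<eta> where "\<eta> = e / (4 * (measure M A + 1))"
  have \<eta>: "0 < \<eta>" using e by (simp add: \<eta>_def add_nonneg_pos)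
  have "\<eta> * measure M A = e / 4 * (measure M A / (measure M A + 1))"
    by (simp add: \<eta>_def field_simps)
  also have "\<dots> \<le> e / 4 * 1"
    using e add_nonneg_pos[OF measure_nonneg zero_less_one, of M A]
    by (intro mult_left_mono) (auto simp: divide_le_eq_1)
  finally have "\<eta> * measure M A \<le> e / 4" by simp
  have "\<forall>\<^sub>F s in at_right 0. (\<integral>x. (T s u x - u x)\<^sup>2 \<partial>M) < \<eta> * e / 4"
    using order_tendstoD(2)[OF tendsto_T[OF L2_Dset[OF u]], of "\<eta> * e / 4"] \<eta> e by simp
  with eventually_at_right_less[of "0::real"]
  show "\<forall>\<^sub>F s in at_right 0. (\<integral>x. \<bar>u x - ptf p s u x\<bar> \<partial>M) < e"
  proof (rule eventually_elim2)
    fix s :: real assume s: "0 < s" and small: "(\<integral>x. (T s u x - u x)\<^sup>2 \<partial>M) < \<eta> * e / 4"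
    have "(1 / \<eta>) * (\<integral>x. (T s u x - u x)\<^sup>2 \<partial>M) < (1 / \<eta>) * (\<eta> * e / 4)"
      using small \<eta> by (intro mult_strict_left_mono) auto
    then have "(1 / \<eta>) * (\<integral>x. (T s u x - u x)\<^sup>2 \<partial>M) < e / 4" using \<eta> by simp
    then have "2 * (\<eta> * measure M A + (1 / \<eta>) * (\<integral>x. (T s u x - u x)\<^sup>2 \<partial>M)) < e"
      using \<open>\<eta> * measure M A \<le> e / 4\<close> by argo
    moreover have "(\<integral>x. \<bar>u x - ptf p s u x\<bar> \<partial>M) \<le>
        2 * (\<eta> * measure M A + (1 / \<eta>) * (\<integral>x. (T s u x - u x)\<^sup>2 \<partial>M))"
      using s by (intro integral_abs_diff_ptf_le[OF u A(1,2) _ _ \<eta>] A(3)) auto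
    ultimately show "(\<integral>x. \<bar>u x - ptf p s u x\<bar> \<partial>M) < e" by linarith
  qed
qed

lemma integral_abs_diff_time_average_le:
  assumes u: "u \<in> Dset M" and t: "0 < t" and "0 \<le> e"
    and e: "\<And>s. s \<in> {0<..t} \<Longrightarrow> (\<integral>x. \<bar>u x - ptf p s u x\<bar> \<partial>M) \<le> e"
  shows "(\<integral>x. \<bar>u x - time_average p t u x\<bar> \<partial>M) \<le> e"
proof -
  obtain B where B: "\<And>y. y \<in> space M \<Longrightarrow> 0 \<le> u y \<and> u y \<le> B"
    using Dset_nonneg_bounded[OF u] by blast
  note u_meas = Dset_measurable[OF u]
  have "ennreal (\<integral>x. \<bar>u x - time_average p t u x\<bar> \<partial>M) = (\<integral>\<^sup>+x. \<bar>u x - time_average p t u x\<bar> \<partial>M)"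
    using Dset_integrable[OF u] integrable_time_average[OF u t]
    by (intro nn_integral_eq_integral[symmetric]) auto
  also have "\<dots> \<le> (\<integral>\<^sup>+x. interval_mean t (\<lambda>s. \<bar>u x - ptf p s u x\<bar>) \<partial>M)"
    using abs_diff_time_average_le[OF u_meas B t] by (intro nn_integral_mono ennreal_leI) simp
  also have "\<dots> \<le> e"
  proof (rule nn_integral_time_average_le[where \<phi>="\<lambda>a b. \<bar>a - b\<bar>" and c=B, OF u_meas B _ _ t])
    fix s assume s: "s \<in> {0<..t}"
    have "(\<integral>\<^sup>+x. \<bar>u x - ptf p s u x\<bar> \<partial>M) = (\<integral>x. \<bar>u x - ptf p s u x\<bar> \<partial>M)"
      using s Dset_integrable[OF u] integrable_ptf(1)[OF u, of s] by (intro nn_integral_eq_integral) auto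
    also have "\<dots> \<le> e" using e[OF s] by (rule ennreal_leI)
    finally show "(\<integral>\<^sup>+x. \<bar>u x - ptf p s u x\<bar> \<partial>M) \<le> e" .
  qed (use \<open>0 \<le> e\<close> in auto)
  finally show ?thesis using \<open>0 \<le> e\<close> by (simp add: ennreal_le_iff)
qed

lemma tendsto_integral_abs_diff_time_average:
  assumes u: "u \<in> Dset M" and A: "A \<in> sets M" "emeasure M A < \<infinity>" "\<And>x. x \<in> space M - A \<Longrightarrow> u x = 0"
  shows "((\<lambda>t. \<integral>x. \<bar>u x - time_average p t u x\<bar> \<partial>M) \<longlongrightarrow> 0) (at_right 0)"
  using tendsto_integral_abs_diff_ptf[OF u A]
  by (rule tendsto_at_right_0_by_running_bound) (auto intro: integral_abs_diff_time_average_le[OF u])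

lemma D0set_L1:
  assumes "g \<in> D0set M p"
  shows "L1 M g \<and> (AE x in M. 0 \<le> g x)"
proof -
  obtain u t where u: "u \<in> Dset M" and t: "0 < t" and g: "g = time_average p t u"
    using assms unfolding D0set_iff by blast
  show ?thesis
    using integrable_time_average[OF u t] D0set_L2[OF assms] by (simp add: L1_def g)
qed

lemma D0set_dense_L1:
  assumes f: "L1 M f" "AE x in M. 0 \<le> f x" and e: "0 < e"
  shows "\<exists>g\<in>D0set M p. (\<integral>x. \<bar>f x - g x\<bar> \<partial>M) < e"
proof -
  have f_int: "integrable M f" using f(1) by (simp add: L1_def)
  obtain n where n: "(\<integral>x. \<bar>f x - truncation n f x\<bar> \<partial>M) < e / 2"
    using order_tendstoD(2)[OF tendsto_integral_abs_diff_truncation[OF f_int f(2)], of "e / 2"] e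
    by (auto simp: eventually_sequentially)
  define u where "u = truncation n f"
  have u: "u \<in> Dset M"
    unfolding u_def using f_int by (intro truncation_in_Dset[where g="\<lambda>x. \<bar>f x\<bar>"] truncation_le_abs) auto
  obtain A where A: "A \<in> sets M" "emeasure M A < \<infinity>" "\<And>x. x \<in> space M - A \<Longrightarrow> u x = 0"
    using truncation_support_finite[OF f_int] unfolding u_def by blast
  obtain t where t: "0 < t" and ut: "(\<integral>x. \<bar>u x - time_average p t u x\<bar> \<partial>M) < e / 2"
    using order_tendstoD(2)[OF tendsto_integral_abs_diff_time_average[OF u A], of "e / 2"] e
    by (auto elim: eventually_at_right_0E)
  have "(\<integral>x. \<bar>f x - time_average p t u x\<bar> \<partial>M) \<le>
      (\<integral>x. \<bar>f x - u x\<bar> \<partial>M) + (\<integral>x. \<bar>u x - time_average p t u x\<bar> \<partial>M)"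
    using f_int Dset_integrable[OF u] integrable_time_average[OF u t] by (rule integral_abs_diff_triangle)
  also have "\<dots> < e" using n ut by (simp add: u_def)
  finally have "(\<integral>x. \<bar>f x - time_average p t u x\<bar> \<partial>M) < e" .
  moreover have "time_average p t u \<in> D0set M p" unfolding D0set_iff using u t by blast
  ultimately show ?thesis by blast
qed

end

theorem lemma2p3:
  fixes M :: "'a measure"
    and p :: "real \<Rightarrow> 'a \<Rightarrow> 'a measure"
    and T :: "real \<Rightarrow> ('a \<Rightarrow> real) \<Rightarrow> ('a \<Rightarrow> real)"
  assumes "sigma_finite_measure M"
    and "transition_prob M p"
    and "strongly_cont_semigroup_L2 M T"
    and "\<And>t f. 0 \<le> t \<Longrightarrow> bdd_meas M f \<Longrightarrow> integrable M (\<lambda>x. (f x)\<^sup>2) \<Longrightarrow>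
            AE x in M. ptf p t f x = T t f x"
  shows "(\<forall>g\<in>D0set M p. L2 M g \<and> (AE x in M. 0 \<le> g x)) \<and>
         (\<forall>f. L2 M f \<longrightarrow> (AE x in M. 0 \<le> f x) \<longrightarrow>
            (\<forall>e>0. \<exists>g\<in>D0set M p. (\<integral>x. (f x - g x)\<^sup>2 \<partial>M) < e)) \<and>
         (symmetric_semigroup_L2 M T \<longrightarrow>
         (\<forall>g\<in>D0set M p. L1 M g \<and> (AE x in M. 0 \<le> g x)) \<and>
         (\<forall>f. L1 M f \<longrightarrow> (AE x in M. 0 \<le> f x) \<longrightarrow>
            (\<forall>e>0. \<exists>g\<in>D0set M p. (\<integral>x. \<bar>f x - g x\<bar> \<partial>M) < e)))"
proof -
  interpret kernel_semigroup M p T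
    using assms by (simp add: kernel_semigroup_def kernel_semigroup_axioms_def transition_kernel_def L2_semigroup_def)
  have symmetric_case: "(\<forall>g\<in>D0set M p. L1 M g \<and> (AE x in M. 0 \<le> g x)) \<and>
      (\<forall>f. L1 M f \<longrightarrow> (AE x in M. 0 \<le> f x) \<longrightarrow>
        (\<forall>e>0. \<exists>g\<in>D0set M p. (\<integral>x. \<bar>f x - g x\<bar> \<partial>M) < e))"
    if "symmetric_semigroup_L2 M T"
  proof -
    interpret symmetric_kernel_semigroup M p T
      using that by unfold_locales
    show ?thesis using D0set_L1 D0set_dense_L1 by blast
  qed
  show ?thesis using D0set_L2 D0set_dense_L2 symmetric_case by blast
qed

end
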